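(* Let $(R,\mathfrak{m})$ be a one-dimensional Cohen–Macaulay local ring. Let $I$ be a regular trace ideal with a principal reduction $(x)$, and let $J$ be a trace ideal with $I\subseteq J\subseteq\bar I$. If $J$ is stable, then $I=J$.
   Context: An ideal is regular if it contains a nonzerodivisor. A principal reduction of $I$ is a principal ideal $(x)\subseteq I$ with $xI^n=I^{n+1}$ for some $n$. For an $R$-module $N$, $\operatorname{tr}(N)$ is the image of $N\otimes_R\operatorname{Hom}_R(N,R)\to R$; an ideal is a trace ideal if it equals $\operatorname{tr}(N)$ for some $N$. $\bar I$ is the integral closure of $I$. $Q(R)$ is the total quotient ring; for a regular ideal $J$, $B_R(J)=\bigcup_{n>0}(J^n:_{Q(R)}J^n)$, and $J$ is stable if $B_R(J)=J:_{Q(R)}J$. *)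

theory Defs
  imports Main "HOL.Modules"
begin

text \<open>Commutative ring R is the type 'a :: comm_ring_1; ideals are subsets of the type.\<close>

definition is_ideal :: "'a::comm_ring_1 set \<Rightarrow> bool" where
  "is_ideal I \<longleftrightarrow> 0 \<in> I \<and> (\<forall>a\<in>I. \<forall>b\<in>I. a + b \<in> I) \<and> (\<forall>r. \<forall>a\<in>I. r * a \<in> I)"

definition ideal_gen :: "'a::comm_ring_1 set \<Rightarrow> 'a set" where
  "ideal_gen S = \<Inter>{I. is_ideal I \<and> S \<subseteq> I}"

definition prime_ideal :: "'a::comm_ring_1 set \<Rightarrow> bool" where
  "prime_ideal P \<longleftrightarrow> is_ideal P \<and> P \<noteq> UNIV \<and> (\<forall>a b. a * b \<in> P \<longrightarrow> a \<in> P \<or> b \<in> P)"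

definition maximal_ideal :: "'a::comm_ring_1 set \<Rightarrow> bool" where
  "maximal_ideal M \<longleftrightarrow> is_ideal M \<and> M \<noteq> UNIV \<and>
     (\<forall>K. is_ideal K \<and> M \<subseteq> K \<longrightarrow> K = M \<or> K = UNIV)"

definition local_ring :: "'a::comm_ring_1 set \<Rightarrow> bool" where
  "local_ring M \<longleftrightarrow> maximal_ideal M \<and> (\<forall>M'. maximal_ideal M' \<longrightarrow> M' = M)"

definition noetherian :: "'a::comm_ring_1 itself \<Rightarrow> bool" where
  "noetherian (T::'a itself) \<longleftrightarrow>
     (\<forall>I::'a set. is_ideal I \<longrightarrow> (\<exists>F. finite F \<and> I = ideal_gen F))"

text \<open>A chain of primes P_0 \<subset> ... \<subset> P_k, given as a list (length k+1).\<close>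
definition prime_chain :: "'a::comm_ring_1 set list \<Rightarrow> bool" where
  "prime_chain ps \<longleftrightarrow> ps \<noteq> [] \<and> (\<forall>P\<in>set ps. prime_ideal P) \<and> sorted_wrt (\<subset>) ps"

definition krull_dim_is :: "'a::comm_ring_1 itself \<Rightarrow> nat \<Rightarrow> bool" where
  "krull_dim_is (T::'a itself) d \<longleftrightarrow>
     (\<exists>ps::'a set list. prime_chain ps \<and> length ps = d + 1) \<and>
     (\<forall>ps::'a set list. prime_chain ps \<longrightarrow> length ps \<le> d + 1)"

definition nonzerodivisor :: "'a::comm_ring_1 \<Rightarrow> bool" where
  "nonzerodivisor s \<longleftrightarrow> (\<forall>r. s * r = 0 \<longrightarrow> r = 0)"

definition regular_seq :: "'a::comm_ring_1 set \<Rightarrow> 'a list \<Rightarrow> bool" where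
  "regular_seq M xs \<longleftrightarrow> set xs \<subseteq> M \<and> ideal_gen (set xs) \<noteq> UNIV \<and>
     (\<forall>i < length xs. \<forall>r. xs ! i * r \<in> ideal_gen (set (take i xs)) \<longrightarrow> r \<in> ideal_gen (set (take i xs)))"

text \<open>Cohen-Macaulay local ring: depth = dim, i.e. m contains a regular sequence of length dim R
  (depth never exceeds dim).\<close>
definition cohen_macaulay_local :: "'a::comm_ring_1 set \<Rightarrow> bool" where
  "cohen_macaulay_local M \<longleftrightarrow> local_ring M \<and> noetherian TYPE('a) \<and>
     (\<exists>d. krull_dim_is TYPE('a) d \<and> (\<exists>xs. regular_seq M xs \<and> length xs = d))"

definition regular_ideal :: "'a::comm_ring_1 set \<Rightarrow> bool" where
  "regular_ideal I \<longleftrightarrow> (\<exists>s\<in>I. nonzerodivisor s)"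

fun ideal_pow :: "'a::comm_ring_1 set \<Rightarrow> nat \<Rightarrow> 'a set" where
  "ideal_pow I 0 = UNIV"
| "ideal_pow I (Suc n) = ideal_gen {a * b | a b. a \<in> I \<and> b \<in> ideal_pow I n}"

definition principal_reduction :: "'a::comm_ring_1 \<Rightarrow> 'a set \<Rightarrow> bool" where
  "principal_reduction x I \<longleftrightarrow> x \<in> I \<and> (\<exists>n. (\<lambda>b. x * b) ` ideal_pow I n = ideal_pow I (Suc n))"

definition integral_closure :: "'a::comm_ring_1 set \<Rightarrow> 'a set" where
  "integral_closure I = {r. \<exists>n\<ge>1. \<exists>a::nat \<Rightarrow> 'a. (\<forall>i\<in>{1..n}. a i \<in> ideal_pow I i) \<and>
      r ^ n + (\<Sum>i=1..n. a i * r ^ (n - i)) = 0}"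

text \<open>Trace of the R-module N (the type 'b with scalar multiplication scale):
  the image of N \<otimes> Hom_R(N,R) \<rightarrow> R, i.e. all finite sums of f_i(n_i), f_i \<in> Hom_R(N,R).\<close>
definition trace_of :: "('a::comm_ring_1 \<Rightarrow> 'b::ab_group_add \<Rightarrow> 'b) \<Rightarrow> 'a set" where
  "trace_of scale = {(\<Sum>i<k. f i (v i)) | (k::nat) (f::nat \<Rightarrow> 'b \<Rightarrow> 'a) (v::nat \<Rightarrow> 'b).
     \<forall>i<k. module_hom scale ((*) :: 'a \<Rightarrow> 'a \<Rightarrow> 'a) (f i)}"

text \<open>Elements of the total quotient ring Q(R) are fractions a/s with s a nonzerodivisor;
  a subset of Q(R) is represented by the set of all pairs (a,s) representing its elements.
  For ideals A, B, the colon A :_Q B = {q \<in> Q(R). q B \<subseteq> A}; (a/s) b \<in> A (viewed in Q(R))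
  iff a b = s c for some c \<in> A.\<close>
definition frac_colon :: "'a::comm_ring_1 set \<Rightarrow> 'a set \<Rightarrow> ('a \<times> 'a) set" where
  "frac_colon A B = {(a, s). nonzerodivisor s \<and> (\<forall>b\<in>B. \<exists>c\<in>A. a * b = s * c)}"

definition blowup_ring :: "'a::comm_ring_1 set \<Rightarrow> ('a \<times> 'a) set" where
  "blowup_ring J = (\<Union>n\<in>{0<..}. frac_colon (ideal_pow J n) (ideal_pow J n))"

definition stable_ideal :: "'a::comm_ring_1 set \<Rightarrow> bool" where
  "stable_ideal J \<longleftrightarrow> regular_ideal J \<and> blowup_ring J = frac_colon J J"

end

theory Submission
  imports Defs
begin

(* Since J is finitely generated and integral over I, the ideal I is a reduction of J, and hence
   so is (x). For j in J the fraction j/x therefore maps J^n into itself for large n, so stability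
   of J puts j/x into J :_Q J, which is contained in R :_Q I. For a trace ideal I = tr(N), every
   q in R :_Q I maps I into I, because q composed with a functional N -> I is again a functional
   N -> R; hence j = (j/x) x lies in I. *)

lemma module_mult: "module ((*) :: 'a::comm_ring_1 \<Rightarrow> 'a \<Rightarrow> 'a)"
  by unfold_locales (simp_all add: algebra_simps)

lemma is_ideal_iff_subspace: "is_ideal I \<longleftrightarrow> module.subspace (*) I"
  by (simp add: is_ideal_def module.subspace_def[OF module_mult])

lemma ideal_gen_eq_span: "ideal_gen S = module.span (*) S"
  by (simp add: ideal_gen_def module.span_def[OF module_mult] hull_def is_ideal_iff_subspace)

lemmas is_ideal_UNIV = module.subspace_UNIV[OF module_mult, folded is_ideal_iff_subspace]
  and ideal_zero = module.subspace_0[OF module_mult, folded is_ideal_iff_subspace]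
  and ideal_add = module.subspace_add[OF module_mult, folded is_ideal_iff_subspace]
  and ideal_mult = module.subspace_scale[OF module_mult, folded is_ideal_iff_subspace]
  and ideal_uminus = module.subspace_neg[OF module_mult, folded is_ideal_iff_subspace]
  and ideal_sum = module.subspace_sum[OF module_mult, folded is_ideal_iff_subspace]
  and is_ideal_ideal_gen =
    module.subspace_span[OF module_mult, folded ideal_gen_eq_span is_ideal_iff_subspace]
  and ideal_gen_superset = module.span_superset[OF module_mult, folded ideal_gen_eq_span]
  and ideal_gen_minimal =
    module.span_minimal[OF module_mult, folded ideal_gen_eq_span is_ideal_iff_subspace]
  and ideal_gen_mono = module.span_mono[OF module_mult, folded ideal_gen_eq_span]
  and ideal_gen_insert = module.span_insert[OF module_mult, folded ideal_gen_eq_span]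
  and ideal_gen_singleton = module.span_singleton[OF module_mult, folded ideal_gen_eq_span]

lemma ideal_gen_ideal: "is_ideal K \<Longrightarrow> ideal_gen K = K"
  by (simp add: ideal_gen_eq_span is_ideal_iff_subspace module.span_eq_iff[OF module_mult])

lemma ideal_mult_right: "is_ideal K \<Longrightarrow> a \<in> K \<Longrightarrow> a * r \<in> K"
  by (metis ideal_mult mult.commute)

lemma is_ideal_mult_preimage:
  assumes "is_ideal K"
  shows "is_ideal {y. a * y \<in> K}"
  unfolding is_ideal_def
proof (intro conjI ballI allI)
  show "0 \<in> {y. a * y \<in> K}"
    using ideal_zero[OF assms] by simp
  show "y + z \<in> {y. a * y \<in> K}" if "y \<in> {y. a * y \<in> K}" "z \<in> {y. a * y \<in> K}" for y z
    using that ideal_add[OF assms] by (simp add: distrib_left)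
  show "r * y \<in> {y. a * y \<in> K}" if "y \<in> {y. a * y \<in> K}" for r y
    using that ideal_mult[OF assms, of "a * y" r]
    by (simp only: mem_Collect_eq mult.left_commute[of a r y])
qed

definition ideal_prod :: "'a::comm_ring_1 set \<Rightarrow> 'a set \<Rightarrow> 'a set" where
  "ideal_prod A B = ideal_gen {a * b | a b. a \<in> A \<and> b \<in> B}"

lemma ideal_pow_Suc_prod: "ideal_pow I (Suc n) = ideal_prod I (ideal_pow I n)"
  by (simp add: ideal_prod_def)

declare ideal_pow.simps(2)[simp del]

lemma is_ideal_ideal_prod: "is_ideal (ideal_prod A B)"
  by (simp add: ideal_prod_def is_ideal_ideal_gen)

lemma ideal_prod_mem: "a \<in> A \<Longrightarrow> b \<in> B \<Longrightarrow> a * b \<in> ideal_prod A B"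
  unfolding ideal_prod_def by (rule subsetD[OF ideal_gen_superset]) blast

lemma ideal_prod_least:
  "is_ideal K \<Longrightarrow> (\<And>a b. a \<in> A \<Longrightarrow> b \<in> B \<Longrightarrow> a * b \<in> K) \<Longrightarrow> ideal_prod A B \<subseteq> K"
  unfolding ideal_prod_def by (rule ideal_gen_minimal) auto

lemma ideal_prod_mono: "A \<subseteq> A' \<Longrightarrow> B \<subseteq> B' \<Longrightarrow> ideal_prod A B \<subseteq> ideal_prod A' B'"
  by (rule ideal_prod_least[OF is_ideal_ideal_prod]) (auto intro: ideal_prod_mem)

lemma ideal_prod_commute: "ideal_prod A B = ideal_prod B A"
proof -
  have swap: "ideal_prod X Y \<subseteq> ideal_prod Y X" for X Y :: "'a set"
    by (rule ideal_prod_least[OF is_ideal_ideal_prod]) (subst mult.commute, rule ideal_prod_mem)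
  show ?thesis
    using swap[of A B] swap[of B A] by (rule subset_antisym)
qed

lemma ideal_prod_UNIV:
  assumes "is_ideal A"
  shows "ideal_prod A UNIV = A"
proof
  show "ideal_prod A UNIV \<subseteq> A"
    using assms by (intro ideal_prod_least) (auto intro: ideal_mult_right)
  show "A \<subseteq> ideal_prod A UNIV"
    using ideal_prod_mem[of _ A 1 UNIV] by auto
qed

lemma ideal_prod_UNIV_left: "is_ideal A \<Longrightarrow> ideal_prod UNIV A = A"
  by (simp add: ideal_prod_commute ideal_prod_UNIV)

lemma ideal_prod_mult_mem:
  assumes "a \<in> A" and "y \<in> ideal_prod B C"
  shows "a * y \<in> ideal_prod (ideal_prod A B) C"
proof -
  have "ideal_prod B C \<subseteq> {y. a * y \<in> ideal_prod (ideal_prod A B) C}"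
    using \<open>a \<in> A\<close>
    by (intro ideal_prod_least is_ideal_mult_preimage is_ideal_ideal_prod)
      (simp add: ideal_prod_mem mult.assoc[symmetric])
  then show ?thesis using \<open>y \<in> ideal_prod B C\<close> by blast
qed

lemma ideal_prod_assoc: "ideal_prod A (ideal_prod B C) = ideal_prod (ideal_prod A B) C"
proof
  have right: "ideal_prod X (ideal_prod Y Z) \<subseteq> ideal_prod (ideal_prod X Y) Z" for X Y Z :: "'a set"
    by (intro ideal_prod_least is_ideal_ideal_prod ideal_prod_mult_mem)
  then show "ideal_prod A (ideal_prod B C) \<subseteq> ideal_prod (ideal_prod A B) C" .
  have "ideal_prod (ideal_prod A B) C \<subseteq> ideal_prod (ideal_prod C A) B"
    using right[of C A B] by (simp add: ideal_prod_commute)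
  also have "\<dots> \<subseteq> ideal_prod A (ideal_prod B C)"
    using right[of B C A] by (simp add: ideal_prod_commute)
  finally show "ideal_prod (ideal_prod A B) C \<subseteq> ideal_prod A (ideal_prod B C)" .
qed

lemma is_ideal_ideal_pow: "is_ideal (ideal_pow A n)"
  by (cases n) (simp_all add: is_ideal_UNIV ideal_pow_Suc_prod is_ideal_ideal_prod)

lemma ideal_pow_add: "ideal_prod (ideal_pow A m) (ideal_pow A n) = ideal_pow A (m + n)"
  by (induction m) (simp_all add: ideal_prod_UNIV_left is_ideal_ideal_pow ideal_pow_Suc_prod
      ideal_prod_assoc[symmetric])

lemma ideal_pow_mono: "A \<subseteq> B \<Longrightarrow> ideal_pow A n \<subseteq> ideal_pow B n"
  by (induction n) (simp_all add: ideal_pow_Suc_prod ideal_prod_mono)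

lemma power_mem_ideal_pow: "r \<in> A \<Longrightarrow> r ^ n \<in> ideal_pow A n"
  by (induction n) (simp_all add: ideal_pow_Suc_prod ideal_prod_mem)

lemma integral_closure_mono: "A \<subseteq> B \<Longrightarrow> integral_closure A \<subseteq> integral_closure B"
  unfolding integral_closure_def using ideal_pow_mono by blast

definition is_reduction :: "'a::comm_ring_1 set \<Rightarrow> 'a set \<Rightarrow> bool" where
  "is_reduction A B \<longleftrightarrow> (\<exists>n. ideal_prod A (ideal_pow B n) = ideal_pow B (Suc n))"

lemma reduction_exponent_add:
  assumes "ideal_prod A (ideal_pow B n) = ideal_pow B (Suc n)"
  shows "ideal_prod A (ideal_pow B (n + k)) = ideal_pow B (Suc (n + k))"
proof -
  have "ideal_prod A (ideal_pow B (n + k))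
      = ideal_prod (ideal_prod A (ideal_pow B n)) (ideal_pow B k)"
    by (simp only: ideal_pow_add[symmetric] ideal_prod_assoc)
  also have "\<dots> = ideal_pow B (Suc n + k)"
    by (simp only: assms ideal_pow_add)
  finally show ?thesis by simp
qed

lemma ideal_pow_reduction:
  assumes "ideal_prod A (ideal_pow B n) = ideal_pow B (Suc n)"
  shows "ideal_pow B (n + k) = ideal_prod (ideal_pow A k) (ideal_pow B n)"
proof (induction k)
  case 0
  then show ?case by (simp add: ideal_prod_UNIV_left is_ideal_ideal_pow)
next
  case (Suc k)
  have "ideal_pow B (n + Suc k) = ideal_prod A (ideal_pow B (n + k))"
    using reduction_exponent_add[OF assms, of k] by simp
  also have "\<dots> = ideal_prod (ideal_pow A (Suc k)) (ideal_pow B n)"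
    by (simp only: Suc.IH ideal_pow_Suc_prod ideal_prod_assoc)
  finally show ?case .
qed

lemma is_reduction_trans:
  assumes "is_reduction A B" and "is_reduction B C"
  shows "is_reduction A C"
proof -
  obtain n where n: "ideal_prod A (ideal_pow B n) = ideal_pow B (Suc n)"
    using assms(1) unfolding is_reduction_def by blast
  obtain m where m: "ideal_prod B (ideal_pow C m) = ideal_pow C (Suc m)"
    using assms(2) unfolding is_reduction_def by blast
  have "ideal_prod A (ideal_pow C (n + m))
      = ideal_prod A (ideal_prod (ideal_pow B n) (ideal_pow C m))"
    using ideal_pow_reduction[OF m, of n] by (simp only: add.commute)
  also have "\<dots> = ideal_prod (ideal_pow B (Suc n)) (ideal_pow C m)"
    by (simp only: n[symmetric] ideal_prod_assoc)
  also have "\<dots> = ideal_pow C (Suc (n + m))"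
    using ideal_pow_reduction[OF m, of "Suc n"] by (simp only: add.commute add_Suc_right)
  finally show ?thesis
    unfolding is_reduction_def by blast
qed

lemma is_ideal_image_mult:
  assumes "is_ideal Y"
  shows "is_ideal ((*) x ` Y)"
  unfolding is_ideal_def
proof (intro conjI ballI allI)
  show "0 \<in> (*) x ` Y"
    using ideal_zero[OF assms] by (intro image_eqI[of _ _ 0]) simp_all
next
  fix a b assume "a \<in> (*) x ` Y" "b \<in> (*) x ` Y"
  then obtain a' b' where "a' \<in> Y" "b' \<in> Y" "a = x * a'" "b = x * b'" by blast
  then show "a + b \<in> (*) x ` Y"
    by (intro image_eqI[of _ _ "a' + b'"]) (simp_all add: distrib_left ideal_add assms)
next
  fix r a assume "a \<in> (*) x ` Y"
  then obtain a' where "a' \<in> Y" "a = x * a'" by blast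
  then show "r * a \<in> (*) x ` Y"
    by (intro image_eqI[of _ _ "r * a'"]) (simp_all add: mult.left_commute ideal_mult assms)
qed

lemma ideal_prod_principal:
  assumes "is_ideal Y"
  shows "ideal_prod (ideal_gen {x}) Y = (*) x ` Y"
proof
  show "(*) x ` Y \<subseteq> ideal_prod (ideal_gen {x}) Y"
    using ideal_prod_mem ideal_gen_superset by blast
  show "ideal_prod (ideal_gen {x}) Y \<subseteq> (*) x ` Y"
  proof (rule ideal_prod_least[OF is_ideal_image_mult[OF assms]])
    fix a b assume "a \<in> ideal_gen {x}" "b \<in> Y"
    then obtain k where "a = k * x" by (auto simp: ideal_gen_singleton)
    then show "a * b \<in> (*) x ` Y"
      using \<open>b \<in> Y\<close> by (intro image_eqI[of _ _ "k * b"]) (simp_all add: ideal_mult assms)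
  qed
qed

lemma principal_reduction_iff:
  "principal_reduction x I \<longleftrightarrow> x \<in> I \<and> is_reduction (ideal_gen {x}) I"
  by (simp add: principal_reduction_def is_reduction_def ideal_prod_principal is_ideal_ideal_pow)

lemma ideal_pow_insert_subset:
  fixes K :: "'a::comm_ring_1 set" and r :: 'a
  assumes "is_ideal K"
  defines "K' \<equiv> ideal_gen (insert r K)"
  shows "ideal_pow K' (Suc n) \<subseteq> ideal_gen (insert (r ^ Suc n) (ideal_prod K (ideal_pow K' n)))"
proof (induction n)
  case 0
  have "ideal_pow K' (Suc 0) = K'"
    by (simp add: ideal_pow_Suc_prod ideal_prod_UNIV K'_def is_ideal_ideal_gen)
  moreover have "ideal_prod K (ideal_pow K' 0) = K"
    by (simp add: ideal_prod_UNIV assms)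
  ultimately show ?case
    by (simp add: K'_def)
next
  case (Suc n)
  have r: "r \<in> K'"
    unfolding K'_def using ideal_gen_superset by blast
  show ?case
    unfolding ideal_pow_Suc_prod[of K' "Suc n"]
  proof (rule ideal_prod_least[OF is_ideal_ideal_gen])
    fix a b assume a: "a \<in> K'" and b: "b \<in> ideal_pow K' (Suc n)"
    obtain s where k: "a - s * r \<in> K"
      using a by (auto simp: K'_def ideal_gen_insert ideal_gen_ideal assms)
    obtain t where u: "b - t * r ^ Suc n \<in> ideal_prod K (ideal_pow K' n)"
      using Suc.IH b by (auto simp: ideal_gen_insert ideal_gen_ideal is_ideal_ideal_prod)
    have "a * (b - t * r ^ Suc n) \<in> ideal_prod (ideal_prod K' K) (ideal_pow K' n)"
      by (rule ideal_prod_mult_mem[OF a u])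
    also have "\<dots> = ideal_prod K (ideal_pow K' (Suc n))"
      by (simp only: ideal_pow_Suc_prod ideal_prod_assoc ideal_prod_commute[of K' K])
    finally have au: "a * (b - t * r ^ Suc n) \<in> ideal_prod K (ideal_pow K' (Suc n))" .
    have kr: "(a - s * r) * r ^ Suc n \<in> ideal_prod K (ideal_pow K' (Suc n))"
      by (rule ideal_prod_mem[OF k power_mem_ideal_pow[OF r]])
    have "a * b - (s * t) * r ^ Suc (Suc n)
        = a * (b - t * r ^ Suc n) + t * ((a - s * r) * r ^ Suc n)"
      by (simp add: algebra_simps)
    also have "\<dots> \<in> ideal_prod K (ideal_pow K' (Suc n))"
      by (intro ideal_add ideal_mult is_ideal_ideal_prod au kr)
    finally show
      "a * b \<in> ideal_gen (insert (r ^ Suc (Suc n)) (ideal_prod K (ideal_pow K' (Suc n))))"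
      by (auto simp: ideal_gen_insert ideal_gen_ideal is_ideal_ideal_prod)
  qed
qed

lemma integral_power_mem_ideal_prod:
  assumes "K \<subseteq> K'" and "r \<in> K'" and "r \<in> integral_closure K"
  shows "\<exists>n. r ^ Suc n \<in> ideal_prod K (ideal_pow K' n)"
proof -
  obtain d a where "d \<ge> 1" and a: "\<forall>i\<in>{1..d}. a i \<in> ideal_pow K i"
    and eq: "r ^ d + (\<Sum>i=1..d. a i * r ^ (d - i)) = 0"
    using assms(3) unfolding integral_closure_def by blast
  then obtain n where d: "d = Suc n"
    by (cases d) auto
  have "a i * r ^ (d - i) \<in> ideal_prod K (ideal_pow K' n)" if i: "i \<in> {1..d}" for i
  proof -
    obtain j where ij: "i = Suc j" and "j \<le> n"
      using i d by (cases i) auto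
    have "a i \<in> ideal_pow K (Suc j)"
      using a i ij by blast
    also have "\<dots> = ideal_prod K (ideal_pow K j)"
      by (rule ideal_pow_Suc_prod)
    also have "\<dots> \<subseteq> ideal_prod K (ideal_pow K' j)"
      by (intro ideal_prod_mono ideal_pow_mono assms(1) order_refl)
    finally have
      "a i * r ^ (n - j) \<in> ideal_prod (ideal_prod K (ideal_pow K' j)) (ideal_pow K' (n - j))"
      by (intro ideal_prod_mem power_mem_ideal_pow assms(2))
    also have "\<dots> = ideal_prod K (ideal_pow K' n)"
      using \<open>j \<le> n\<close> by (simp add: ideal_prod_assoc[symmetric] ideal_pow_add)
    finally show ?thesis
      using d ij by simp
  qed
  moreover have "r ^ d = - (\<Sum>i=1..d. a i * r ^ (d - i))"
    using eq by (simp add: eq_neg_iff_add_eq_0)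
  ultimately have "r ^ d \<in> ideal_prod K (ideal_pow K' n)"
    by (simp only:) (intro ideal_uminus ideal_sum is_ideal_ideal_prod)
  then show ?thesis
    unfolding d by blast
qed

lemma is_reduction_insert_integral:
  assumes "is_ideal K" and "r \<in> integral_closure K"
  shows "is_reduction K (ideal_gen (insert r K))"
proof -
  define K' where "K' = ideal_gen (insert r K)"
  have "K \<subseteq> K'" and "r \<in> K'"
    using ideal_gen_superset[of "insert r K"] by (auto simp: K'_def)
  then obtain n where n: "r ^ Suc n \<in> ideal_prod K (ideal_pow K' n)"
    using integral_power_mem_ideal_prod assms(2) by blast
  have "ideal_pow K' (Suc n) \<subseteq> ideal_gen (insert (r ^ Suc n) (ideal_prod K (ideal_pow K' n)))"
    unfolding K'_def by (rule ideal_pow_insert_subset[OF assms(1)])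
  also have "\<dots> = ideal_prod K (ideal_pow K' n)"
    using n by (simp add: insert_absorb ideal_gen_ideal is_ideal_ideal_prod)
  finally have "ideal_pow K' (Suc n) \<subseteq> ideal_prod K (ideal_pow K' n)" .
  moreover have "ideal_prod K (ideal_pow K' n) \<subseteq> ideal_pow K' (Suc n)"
    unfolding ideal_pow_Suc_prod using \<open>K \<subseteq> K'\<close> by (rule ideal_prod_mono) simp
  ultimately show ?thesis
    unfolding is_reduction_def K'_def[symmetric] by blast
qed

lemma is_reduction_finite_integral:
  assumes "finite F" and "is_ideal I" and "F \<subseteq> integral_closure I"
  shows "is_reduction I (ideal_gen (I \<union> F))"
  using assms
proof (induction F rule: finite_induct)
  case empty
  then show ?case
    unfolding is_reduction_def
    by (intro exI[of _ 0]) (simp add: ideal_gen_ideal ideal_pow_Suc_prod ideal_prod_UNIV)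
next
  case (insert f F)
  define K where "K = ideal_gen (I \<union> F)"
  have "I \<subseteq> K"
    using ideal_gen_superset K_def by blast
  have "ideal_gen (I \<union> insert f F) = ideal_gen (insert f K)"
  proof
    show "ideal_gen (I \<union> insert f F) \<subseteq> ideal_gen (insert f K)"
      using ideal_gen_superset[of "I \<union> F"] by (intro ideal_gen_mono) (auto simp: K_def)
    have "K \<subseteq> ideal_gen (I \<union> insert f F)"
      unfolding K_def by (rule ideal_gen_mono) blast
    then show "ideal_gen (insert f K) \<subseteq> ideal_gen (I \<union> insert f F)"
      using ideal_gen_superset[of "I \<union> insert f F"]
      by (intro ideal_gen_minimal is_ideal_ideal_gen) auto
  qed
  moreover have "is_reduction I K"
    using insert by (simp add: K_def)
  moreover have "is_reduction K (ideal_gen (insert f K))"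
    using insert.prems integral_closure_mono[OF \<open>I \<subseteq> K\<close>]
    by (intro is_reduction_insert_integral) (auto simp: K_def is_ideal_ideal_gen)
  ultimately show ?case
    by (simp add: is_reduction_trans[of I K])
qed

lemma is_reduction_of_integral:
  fixes I J :: "'a::comm_ring_1 set"
  assumes "noetherian TYPE('a)" and "is_ideal I" and "is_ideal J"
    and "I \<subseteq> J" and "J \<subseteq> integral_closure I"
  shows "is_reduction I J"
proof -
  obtain F where "finite F" and J: "J = ideal_gen F"
    using assms(1,3) unfolding noetherian_def by blast
  have "F \<subseteq> J"
    using J ideal_gen_superset by blast
  have "ideal_gen (I \<union> F) = J"
  proof
    show "ideal_gen (I \<union> F) \<subseteq> J"
      using assms(3,4) \<open>F \<subseteq> J\<close> by (intro ideal_gen_minimal) auto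
    show "J \<subseteq> ideal_gen (I \<union> F)"
      unfolding J by (rule ideal_gen_mono) blast
  qed
  then show ?thesis
    using is_reduction_finite_integral[OF \<open>finite F\<close> assms(2)] \<open>F \<subseteq> J\<close> assms(5) by auto
qed

lemma nonzerodivisor_mult_cancel:
  assumes "nonzerodivisor t"
  shows "t * a = t * b \<longleftrightarrow> a = b"
proof
  assume "t * a = t * b"
  then have "t * (a - b) = 0"
    by (simp add: right_diff_distrib)
  then have "a - b = 0"
    using assms unfolding nonzerodivisor_def by blast
  then show "a = b"
    by simp
qed simp

lemma nonzerodivisor_factor:
  assumes "nonzerodivisor (a * b)"
  shows "nonzerodivisor a"
  unfolding nonzerodivisor_def
proof (intro allI impI)
  fix r assume "a * r = 0"
  then have "a * b * r = 0"
    by (simp only: mult.commute[of a b] mult.assoc mult_zero_right)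
  then show "r = 0"
    using assms unfolding nonzerodivisor_def by blast
qed

lemma nonzerodivisor_mult:
  assumes "nonzerodivisor a" and "nonzerodivisor b"
  shows "nonzerodivisor (a * b)"
  unfolding nonzerodivisor_def
proof (intro allI impI)
  fix r assume "a * b * r = 0"
  then have "a * (b * r) = 0"
    by (simp only: mult.assoc)
  then have "b * r = 0"
    using assms(1) unfolding nonzerodivisor_def by blast
  then show "r = 0"
    using assms(2) unfolding nonzerodivisor_def by blast
qed

lemma nonzerodivisor_power:
  assumes "nonzerodivisor s"
  shows "nonzerodivisor (s ^ n)"
proof (induction n)
  case 0
  show ?case
    by (simp add: nonzerodivisor_def)
next
  case (Suc n)
  then show ?case
    using assms by (simp add: nonzerodivisor_mult)
qed

lemma principal_reduction_nonzerodivisor: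
  assumes "regular_ideal I" and "principal_reduction x I"
  shows "nonzerodivisor x"
proof -
  obtain s where "s \<in> I" and s: "nonzerodivisor s"
    using assms(1) unfolding regular_ideal_def by blast
  obtain m where m: "(*) x ` ideal_pow I m = ideal_pow I (Suc m)"
    using assms(2) unfolding principal_reduction_def by blast
  have "s ^ Suc m \<in> (*) x ` ideal_pow I m"
    unfolding m by (rule power_mem_ideal_pow[OF \<open>s \<in> I\<close>])
  then obtain c where c: "s ^ Suc m = x * c"
    by blast
  have "nonzerodivisor (x * c)"
    using nonzerodivisor_power[OF s, of "Suc m"] by (simp only: c)
  then show ?thesis
    by (rule nonzerodivisor_factor)
qed

lemma stable_ideal_reduction_colon:
  assumes "stable_ideal J" and "nonzerodivisor x" and "is_reduction (ideal_gen {x}) J"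
    and "j \<in> J"
  shows "(j, x) \<in> frac_colon J J"
proof -
  obtain n where "ideal_prod (ideal_gen {x}) (ideal_pow J n) = ideal_pow J (Suc n)"
    using assms(3) unfolding is_reduction_def by blast
  from reduction_exponent_add[OF this, of 1]
  have red: "(*) x ` ideal_pow J (Suc n) = ideal_pow J (Suc (Suc n))"
    by (simp add: ideal_prod_principal is_ideal_ideal_pow)
  have "\<exists>c\<in>ideal_pow J (Suc n). j * b = x * c" if "b \<in> ideal_pow J (Suc n)" for b
  proof -
    have "j * b \<in> ideal_pow J (Suc (Suc n))"
      unfolding ideal_pow_Suc_prod[of J "Suc n"] using assms(4) that by (rule ideal_prod_mem)
    then have "j * b \<in> (*) x ` ideal_pow J (Suc n)"
      by (simp only: red)
    then show ?thesis
      by blast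
  qed
  then have "(j, x) \<in> frac_colon (ideal_pow J (Suc n)) (ideal_pow J (Suc n))"
    using assms(2) by (simp add: frac_colon_def)
  then have "(j, x) \<in> blowup_ring J"
    unfolding blowup_ring_def by blast
  then show ?thesis
    using assms(1) by (simp add: stable_ideal_def)
qed

lemma frac_colon_mono: "A \<subseteq> A' \<Longrightarrow> B' \<subseteq> B \<Longrightarrow> frac_colon A B \<subseteq> frac_colon A' B'"
  unfolding frac_colon_def by blast

lemma trace_of_hom_mem:
  assumes "module_hom s (*) f"
  shows "f v \<in> trace_of s"
  unfolding trace_of_def mem_Collect_eq
  by (intro exI[of _ 1] exI[of _ "\<lambda>_. f"] exI[of _ "\<lambda>_. v"]) (simp add: assms)

lemma module_hom_divide:
  assumes t: "nonzerodivisor t" and f: "module_hom s (*) f"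
    and divisible: "\<And>w. \<exists>c. a * f w = t * c"
  shows "\<exists>g. module_hom s (*) g \<and> (\<forall>w. a * f w = t * g w)"
proof -
  define g where "g w = (THE c. a * f w = t * c)" for w
  have g: "a * f w = t * g w" for w
  proof -
    obtain c where c: "a * f w = t * c"
      using divisible by blast
    have "g w = c"
      unfolding g_def
    proof (rule the_equality)
      show "a * f w = t * c"
        by (rule c)
      show "c' = c" if "a * f w = t * c'" for c'
        using c that by (simp add: nonzerodivisor_mult_cancel[OF t])
    qed
    with c show ?thesis
      by simp
  qed
  have g_eq: "g w = c" if "a * f w = t * c" for w c
    using g[of w] that by (simp add: nonzerodivisor_mult_cancel[OF t])
  have "module_hom s (*) g"
    unfolding module_hom_iff
  proof (intro conjI allI)
    show "module s"
      using f by (simp add: module_hom_iff)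
    show "module ((*) :: 'a \<Rightarrow> 'a \<Rightarrow> 'a)"
      by (rule module_mult)
    show "g (v + w) = g v + g w" for v w
      using f by (intro g_eq) (simp add: module_hom_iff distrib_left g)
    show "g (s c w) = c * g w" for c w
    proof (rule g_eq)
      have "a * f (s c w) = c * (a * f w)"
        using f by (simp add: module_hom_iff mult.left_commute)
      also have "\<dots> = t * (c * g w)"
        by (simp add: g mult.left_commute)
      finally show "a * f (s c w) = t * (c * g w)" .
    qed
  qed
  then show ?thesis
    using g by blast
qed

lemma frac_colon_trace:
  fixes s :: "'a::comm_ring_1 \<Rightarrow> 'b::ab_group_add \<Rightarrow> 'b"
  shows "frac_colon UNIV (trace_of s) = frac_colon (trace_of s) (trace_of s)"
proof
  show "frac_colon (trace_of s) (trace_of s) \<subseteq> frac_colon UNIV (trace_of s)"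
    by (rule frac_colon_mono) auto
  show "frac_colon UNIV (trace_of s) \<subseteq> frac_colon (trace_of s) (trace_of s)"
  proof (rule subrelI)
    fix a t assume "(a, t) \<in> frac_colon UNIV (trace_of s)"
    then have t: "nonzerodivisor t"
      and divisible: "\<And>y. y \<in> trace_of s \<Longrightarrow> \<exists>c. a * y = t * c"
      by (auto simp: frac_colon_def)
    have "\<exists>c\<in>trace_of s. a * y = t * c" if y_mem: "y \<in> trace_of s" for y
    proof -
      obtain k and f :: "nat \<Rightarrow> 'b \<Rightarrow> 'a" and v where y: "y = (\<Sum>i<k. f i (v i))"
        and f: "\<forall>i<k. module_hom s (*) (f i)"
        using y_mem unfolding trace_of_def by blast
      have "\<forall>i\<in>{..<k}. \<exists>g. module_hom s (*) g \<and> (\<forall>w. a * f i w = t * g w)"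
      proof
        fix i assume "i \<in> {..<k}"
        then have fi: "module_hom s (*) (f i)"
          using f by blast
        show "\<exists>g. module_hom s (*) g \<and> (\<forall>w. a * f i w = t * g w)"
          by (rule module_hom_divide[OF t fi divisible[OF trace_of_hom_mem[OF fi]]])
      qed
      then obtain g
        where g: "\<forall>i\<in>{..<k}. module_hom s (*) (g i) \<and> (\<forall>w. a * f i w = t * g i w)"
        by (rule bchoice[THEN exE])
      have "(\<Sum>i<k. g i (v i)) \<in> trace_of s"
        unfolding trace_of_def mem_Collect_eq
        by (intro exI[of _ k] exI[of _ g] exI[of _ v]) (simp add: g)
      moreover have "a * y = t * (\<Sum>i<k. g i (v i))"
        unfolding y sum_distrib_left using g by simp
      ultimately show ?thesis
        by blast
    qed
    then show "(a, t) \<in> frac_colon (trace_of s) (trace_of s)"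
      using t by (simp add: frac_colon_def)
  qed
qed

lemma trace_of_frac_colon_mem:
  assumes "(a, t) \<in> frac_colon UNIV (trace_of s)" and "t \<in> trace_of s"
  shows "a \<in> trace_of s"
proof -
  have "(a, t) \<in> frac_colon (trace_of s) (trace_of s)"
    using assms(1) by (simp add: frac_colon_trace)
  then obtain c where "c \<in> trace_of s" and "a * t = t * c" and t: "nonzerodivisor t"
    using assms(2) unfolding frac_colon_def by blast
  then have "t * a = t * c"
    by (simp add: mult.commute)
  with \<open>c \<in> trace_of s\<close> show ?thesis
    by (simp add: nonzerodivisor_mult_cancel[OF t])
qed

theorem lemma6p3:
  fixes M I J :: "'a::comm_ring_1 set" and x :: 'a
    and sN :: "'a \<Rightarrow> 'b::ab_group_add \<Rightarrow> 'b"
    and sL :: "'a \<Rightarrow> 'c::ab_group_add \<Rightarrow> 'c"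
  assumes "noetherian TYPE('a)"
    and "local_ring M"
    and "krull_dim_is TYPE('a) 1"
    and "cohen_macaulay_local M"
    and "is_ideal I" and "regular_ideal I"
    and "module sN" and "I = trace_of sN"
    and "principal_reduction x I"
    and "is_ideal J" and "module sL" and "J = trace_of sL"
    and "I \<subseteq> J" and "J \<subseteq> integral_closure I"
    and "stable_ideal J"
  shows "I = J"
proof (rule subset_antisym)
  show "I \<subseteq> J"
    by (rule assms(13))
  have "x \<in> I" and x_red_I: "is_reduction (ideal_gen {x}) I"
    using assms(9) by (simp_all add: principal_reduction_iff)
  from x_red_I have x_red: "is_reduction (ideal_gen {x}) J"
    using is_reduction_of_integral[OF assms(1,5,10,13,14)] by (rule is_reduction_trans)
  have x: "nonzerodivisor x"
    using assms(6,9) by (rule principal_reduction_nonzerodivisor)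
  show "J \<subseteq> I"
  proof
    fix j assume "j \<in> J"
    with assms(15) x x_red have "(j, x) \<in> frac_colon J J"
      by (rule stable_ideal_reduction_colon)
    then have "(j, x) \<in> frac_colon UNIV (trace_of sN)"
      using frac_colon_mono[OF subset_UNIV assms(13)] assms(8) by blast
    then show "j \<in> I"
      using \<open>x \<in> I\<close> assms(8) trace_of_frac_colon_mem by blast
  qed
qed

end
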